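(* The language $\bigcup_{w\in\{0,1\}^*}(w \,\text{ш}\, w \,\text{ш}\, w)$ is not context-free.
   Context: For words $x,y$, the (ordinary) shuffle $x \,\text{ш}\, y$ is the finite set of all words $z = x_1y_1x_2y_2\cdots x_ny_n$ for some $n\ge 1$ and words $x_1,\dots,x_n,y_1,\dots,y_n$ (possibly empty) with $x=x_1\cdots x_n$ and $y=y_1\cdots y_n$. It is extended to languages by $L_1\,\text{ш}\,L_2=\bigcup_{x\in L_1,y\in L_2}(x\,\text{ш}\,y)$, so $w\,\text{ш}\,w\,\text{ш}\,w = (w\,\text{ш}\,w)\,\text{ш}\,\{w\}$. *)

theory Defs
  imports Main
begin

datatype bit01 = Zero | One

definition shuffle3 :: "'a list \<Rightarrow> 'a list set" where
  "shuffle3 w = (\<Union>z \<in> shuffles w w. shuffles z w)"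

definition L3 :: "bit01 list set" where
  "L3 = (\<Union>w. shuffle3 w)"

(* Context-free grammars: productions A -> alpha, with nonterminals 'n and
   terminals 't; sentential forms are lists over 'n + 't (Inl = nonterminal). *)
type_synonym ('n, 't) prods = "('n \<times> ('n + 't) list) set"

definition derive1 :: "('n, 't) prods \<Rightarrow> ('n + 't) list \<Rightarrow> ('n + 't) list \<Rightarrow> bool" where
  "derive1 P u v \<longleftrightarrow>
     (\<exists>l A \<alpha> r. (A, \<alpha>) \<in> P \<and> u = l @ [Inl A] @ r \<and> v = l @ \<alpha> @ r)"

definition derives :: "('n, 't) prods \<Rightarrow> ('n + 't) list \<Rightarrow> ('n + 't) list \<Rightarrow> bool" where
  "derives P = (derive1 P)\<^sup>*\<^sup>*"

definition lang :: "('n, 't) prods \<Rightarrow> 'n \<Rightarrow> 't list set" where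
  "lang P S = {w. derives P [Inl S] (map Inr w)}"

(* A language is context-free iff it is generated by some finite CFG.
   Nonterminals are taken from nat (any finite grammar can be renamed into nat). *)
definition context_free :: "'t list set \<Rightarrow> bool" where
  "context_free L \<longleftrightarrow> (\<exists>(P :: (nat, 't) prods) S. finite P \<and> lang P S = L)"

end

theory Submission
  imports Defs
begin

(* The proof applies the pumping lemma to the word (0 1^n)^3 with n larger than the pumping
   length.

   The language-specific part rests on one necessary condition for membership in L3
   (L3_ones_before_bound): a word of L3 starting with 0 has at most k/3 of its 1s before its
   (k+1)-st 0, because such a prefix consists of three prefixes of w, each starting with 0.
   Depending on how many 0s the pumped parts contain, pumping then either breaks this bound
   for k = 1 or k = 2, breaks divisibility of the number of 0s by 3, or contradicts the
   length bound of the pumping lemma. *)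

datatype ('n, 't) ptree = Leaf 't | Node 'n "('n, 't) ptree list"

fun root :: "('n, 't) ptree \<Rightarrow> 'n + 't" where
  "root (Leaf a) = Inr a"
| "root (Node A ts) = Inl A"

fun yield :: "('n, 't) ptree \<Rightarrow> 't list" where
  "yield (Leaf a) = [a]"
| "yield (Node A ts) = concat (map yield ts)"

fun parse_tree :: "('n, 't) prods \<Rightarrow> ('n, 't) ptree \<Rightarrow> bool" where
  "parse_tree P (Leaf a) = True"
| "parse_tree P (Node A ts) = ((A, map root ts) \<in> P \<and> (\<forall>t \<in> set ts. parse_tree P t))"

fun height :: "('n, 't) ptree \<Rightarrow> nat" where
  "height (Leaf a) = 0"
| "height (Node A ts) = Suc (Max (insert 0 (height ` set ts)))"

fun tsize :: "('n, 't) ptree \<Rightarrow> nat" where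
  "tsize (Leaf a) = 1"
| "tsize (Node A ts) = Suc (sum_list (map tsize ts))"

fun labels :: "('n, 't) ptree \<Rightarrow> 'n set" where
  "labels (Leaf a) = {}"
| "labels (Node A ts) = insert A (\<Union>t \<in> set ts. labels t)"

(* subtree t s u z: s occurs as a subtree of t, where u is the part of the yield of t
   to the left of s and z the part to its right. *)
inductive subtree :: "('n, 't) ptree \<Rightarrow> ('n, 't) ptree \<Rightarrow> 't list \<Rightarrow> 't list \<Rightarrow> bool" where
  here: "subtree t t [] []"
| below: "subtree c s u z \<Longrightarrow>
    subtree (Node A (ls @ c # rs)) s (concat (map yield ls) @ u) (z @ concat (map yield rs))"

lemma derives_append:
  assumes "derives P \<alpha> \<beta>" and "derives P \<gamma> \<delta>"
  shows "derives P (\<alpha> @ \<gamma>) (\<beta> @ \<delta>)"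
proof -
  have frame: "derives P (l @ \<alpha>' @ r) (l @ \<beta>' @ r)" if "derives P \<alpha>' \<beta>'" for l r \<alpha>' \<beta>'
    using that unfolding derives_def
  proof (induction rule: rtranclp_induct)
    case (step \<beta>'' \<beta>')
    then obtain l' A \<gamma>' r' where "(A, \<gamma>') \<in> P"
      and "\<beta>'' = l' @ [Inl A] @ r'" and "\<beta>' = l' @ \<gamma>' @ r'"
      unfolding derive1_def by blast
    then have "derive1 P (l @ \<beta>'' @ r) (l @ \<beta>' @ r)"
      unfolding derive1_def
      by (intro exI[of _ "l @ l'"] exI[of _ A] exI[of _ \<gamma>'] exI[of _ "r' @ r"]) simp
    with step.IH show ?case by (rule rtranclp.rtrancl_into_rtrancl)
  qed simp
  have "derives P (\<alpha> @ \<gamma>) (\<beta> @ \<gamma>)"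
    using frame[OF assms(1), of "[]" \<gamma>] by simp
  moreover have "derives P (\<beta> @ \<gamma>) (\<beta> @ \<delta>)"
    using frame[OF assms(2), of \<beta> "[]"] by simp
  ultimately show ?thesis
    unfolding derives_def by (rule rtranclp_trans)
qed

lemma derives_concat:
  "(\<forall>t \<in> set ts. derives P [root t] (map Inr (yield t))) \<Longrightarrow>
    derives P (map root ts) (map Inr (concat (map yield ts)))"
proof (induction ts)
  case Nil
  then show ?case by (simp add: derives_def)
next
  case (Cons t ts)
  have "derives P ([root t] @ map root ts) (map Inr (yield t) @ map Inr (concat (map yield ts)))"
    by (rule derives_append) (use Cons in simp_all)
  then show ?case by simp
qed

lemma parse_tree_derives:
  "parse_tree P t \<Longrightarrow> derives P [root t] (map Inr (yield t))"
proof (induction t)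
  case (Leaf a)
  then show ?case by (simp add: derives_def)
next
  case (Node A ts)
  have "derive1 P [Inl A] (map root ts)"
    using Node.prems unfolding derive1_def
    by (intro exI[of _ "[]"] exI[of _ A] exI[of _ "map root ts"]) simp
  moreover have "derives P (map root ts) (map Inr (concat (map yield ts)))"
    using Node by (intro derives_concat) auto
  ultimately show ?case
    unfolding derives_def yield.simps root.simps
    by (rule converse_rtranclp_into_rtranclp)
qed

lemma derives_parse_forest:
  assumes "derives P \<alpha> (map Inr w)"
  shows "\<exists>ts. (\<forall>t \<in> set ts. parse_tree P t) \<and> map root ts = \<alpha> \<and> concat (map yield ts) = w"
  using assms unfolding derives_def
proof (induction rule: converse_rtranclp_induct)
  case base
  show ?case by (intro exI[of _ "map Leaf w"]) (simp add: comp_def)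
next
  case (step \<alpha> \<beta>)
  then obtain ts where ts: "\<forall>t \<in> set ts. parse_tree P t" "map root ts = \<beta>" "concat (map yield ts) = w"
    by blast
  from step.hyps(1) obtain l A \<gamma> r where
    rule: "(A, \<gamma>) \<in> P" "\<alpha> = l @ [Inl A] @ r" "\<beta> = l @ \<gamma> @ r"
    unfolding derive1_def by blast
  obtain ts1 ts23 where "ts = ts1 @ ts23" "l = map root ts1" "\<gamma> @ r = map root ts23"
    using map_eq_append_conv[THEN iffD1, of root ts l "\<gamma> @ r"] ts(2) rule(3) by auto
  moreover obtain ts2 ts3 where "ts23 = ts2 @ ts3" "\<gamma> = map root ts2" "r = map root ts3"
    using map_eq_append_conv[THEN iffD1, of root ts23 \<gamma> r] calculation(3) by auto
  ultimately have split: "ts = ts1 @ ts2 @ ts3"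
    and roots: "l = map root ts1" "\<gamma> = map root ts2" "r = map root ts3"
    by simp_all
  show ?case
  proof (intro exI conjI)
    show "\<forall>t \<in> set (ts1 @ [Node A ts2] @ ts3). parse_tree P t"
      using ts(1) rule(1) unfolding split roots by auto
    show "map root (ts1 @ [Node A ts2] @ ts3) = \<alpha>"
      using rule(2) roots by simp
    show "concat (map yield (ts1 @ [Node A ts2] @ ts3)) = w"
      using ts(3) unfolding split by simp
  qed
qed

lemma lang_iff_parse_tree:
  "w \<in> lang P S \<longleftrightarrow> (\<exists>t. parse_tree P t \<and> root t = Inl S \<and> yield t = w)"
proof
  assume "w \<in> lang P S"
  then have "derives P [Inl S] (map Inr w)"
    unfolding lang_def by (rule CollectD)
  from derives_parse_forest[OF this] obtain ts where ts: "\<forall>t \<in> set ts. parse_tree P t"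
    "map root ts = [Inl S]" "concat (map yield ts) = w"
    by (elim exE conjE) (rule that)
  from ts(2) have "ts = [hd ts]"
    by (cases ts) auto
  with ts show "\<exists>t. parse_tree P t \<and> root t = Inl S \<and> yield t = w"
    by auto
next
  assume "\<exists>t. parse_tree P t \<and> root t = Inl S \<and> yield t = w"
  then obtain t where "parse_tree P t" "root t = Inl S" "yield t = w"
    by blast
  then have "derives P [Inl S] (map Inr w)"
    using parse_tree_derives[of P t] by simp
  then show "w \<in> lang P S"
    unfolding lang_def by (rule CollectI)
qed

lemma subtree_yield: "subtree t s u z \<Longrightarrow> yield t = u @ yield s @ z"
  by (induction rule: subtree.induct) auto

lemma subtree_trans: "subtree t s u z \<Longrightarrow> subtree s r u' z' \<Longrightarrow> subtree t r (u @ u') (z' @ z)"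
proof (induction rule: subtree.induct)
  case (below c s u z A ls rs)
  then show ?case
    using subtree.below[of c r "u @ u'" "z' @ z" A ls rs] by simp
qed simp

lemma subtree_parse_tree: "subtree t s u z \<Longrightarrow> parse_tree P t \<Longrightarrow> parse_tree P s"
  by (induction rule: subtree.induct) auto

lemma subtree_child: "c \<in> set ts \<Longrightarrow> \<exists>u z. subtree (Node A ts) c u z"
  using subtree.below[OF subtree.here] by (metis split_list)

lemma height_child: "c \<in> set ts \<Longrightarrow> height c < height (Node A ts)"
  by (simp add: le_imp_less_Suc)

lemma subtree_height: "subtree t s u z \<Longrightarrow> height s \<le> height t"
proof (induction rule: subtree.induct)
  case (below c s u z A ls rs)
  then show ?case
    using height_child[of c "ls @ c # rs" A] by simp
qed simp

lemma subtree_tsize: "subtree t s u z \<Longrightarrow> s = t \<or> tsize s < tsize t"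
proof (induction rule: subtree.induct)
  case (below c s u z A ls rs)
  have "tsize c < tsize (Node A (ls @ c # rs))"
    by simp
  with below.IH show ?case
    by auto
qed simp

lemma labels_parse_tree: "parse_tree P t \<Longrightarrow> labels t \<subseteq> fst ` P"
proof (induction t)
  case (Node A ts)
  then have "A \<in> fst ` P"
    using image_eqI[of A fst "(A, map root ts)" P] by simp
  moreover have "labels t \<subseteq> fst ` P" if "t \<in> set ts" for t
    using Node that by simp
  ultimately show ?case
    by (simp add: UN_subset_iff)
qed simp

lemma label_subtree: "A \<in> labels t \<Longrightarrow> \<exists>s u z. subtree t s u z \<and> root s = Inl A"
proof (induction t)
  case (Node B ts)
  show ?case
  proof (cases "A = B")
    case True
    then show ?thesis
      by (intro exI[of _ "Node B ts"] exI[of _ "[]"]) (simp add: subtree.here)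
  next
    case False
    with Node.prems obtain c where c: "c \<in> set ts" "A \<in> labels c"
      by auto
    with Node.IH obtain s u z where "subtree c s u z" "root s = Inl A"
      by blast
    moreover obtain u' z' where "subtree (Node B ts) c u' z'"
      using subtree_child[OF c(1)] by blast
    ultimately show ?thesis
      using subtree_trans by blast
  qed
qed simp

lemma subtree_replace:
  assumes "subtree t s u z" and "parse_tree P t" and "parse_tree P s'" and "root s' = root s"
  shows "\<exists>t'. parse_tree P t' \<and> root t' = root t \<and> yield t' = u @ yield s' @ z
    \<and> tsize t' + tsize s = tsize t + tsize s'"
  using assms
proof (induction rule: subtree.induct)
  case (here t)
  then show ?case
    by (intro exI[of _ s']) simp
next
  case (below c s u z A ls rs)
  then obtain c' where c': "parse_tree P c'" "root c' = root c" "yield c' = u @ yield s' @ z"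
    "tsize c' + tsize s = tsize c + tsize s'"
    by auto
  show ?case
  proof (intro exI[of _ "Node A (ls @ c' # rs)"] conjI)
    show "parse_tree P (Node A (ls @ c' # rs))"
      using below.prems(1) c'(1,2) by simp
    show "tsize (Node A (ls @ c' # rs)) + tsize s = tsize (Node A (ls @ c # rs)) + tsize s'"
      using c'(4) by simp
  qed (use c'(3) in simp_all)
qed

lemma yield_length_bound:
  assumes "\<forall>(A, \<alpha>) \<in> P. length \<alpha> \<le> b" and "1 \<le> b" and "parse_tree P t"
  shows "length (yield t) \<le> b ^ height t"
  using assms(3)
proof (induction t)
  case (Node A ts)
  let ?m = "Max (insert 0 (height ` set ts))"
  have "length (yield c) \<le> b ^ ?m" if "c \<in> set ts" for c
  proof -
    have "length (yield c) \<le> b ^ height c"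
      using Node that by simp
    also have "\<dots> \<le> b ^ ?m"
      using that assms(2) by (intro power_increasing) simp_all
    finally show ?thesis .
  qed
  then have "length (yield (Node A ts)) \<le> length ts * b ^ ?m"
    using sum_list_mono[of ts "\<lambda>c. length (yield c)" "\<lambda>_. b ^ ?m"]
    by (simp add: length_concat sum_list_triv comp_def)
  also have "\<dots> \<le> b * b ^ ?m"
    using Node.prems assms(1) by fastforce
  finally show ?case
    by simp
qed simp

lemma tallest_child:
  assumes "1 < height (Node A ts)"
  shows "\<exists>c \<in> set ts. Suc (height c) = height (Node A ts)"
proof -
  let ?m = "Max (insert 0 (height ` set ts))"
  have "?m \<in> insert 0 (height ` set ts)"
    by (rule Max_in) simp_all
  moreover have "?m \<noteq> 0"
    using assms by simp
  ultimately show ?thesis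
    by auto
qed

(* The induction follows a child of maximal height and
   removes the label of the current root from N when it does not recur below. *)
lemma repeated_label:
  assumes "labels t \<subseteq> N" and "finite N" and "card N < height t"
  shows "\<exists>t1 t2 u z v y. subtree t t1 u z \<and> subtree t1 t2 v y \<and> root t2 = root t1
    \<and> height t2 < height t1 \<and> height t1 \<le> card N + 1"
  using assms
proof (induction t arbitrary: N)
  case (Node A ts)
  let ?t = "Node A ts"
  have "A \<in> N"
    using Node.prems(1) by simp
  then have "1 \<le> card N"
    using Node.prems(2) by (simp add: Suc_le_eq card_gt_0_iff, blast)
  then obtain c where c: "c \<in> set ts" "Suc (height c) = height ?t"
    using tallest_child[of A ts] Node.prems(3) by auto
  obtain u0 z0 where sub_c: "subtree ?t c u0 z0"
    using subtree_child[OF c(1)] by blast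
  have lift: "\<exists>t1 t2 u z v y. subtree ?t t1 u z \<and> subtree t1 t2 v y \<and> root t2 = root t1
      \<and> height t2 < height t1 \<and> height t1 \<le> card N + 1"
    if "subtree c t1 u z" "subtree t1 t2 v y" "root t2 = root t1"
      "height t2 < height t1" "height t1 \<le> card N + 1" for t1 t2 u z v y
    using subtree_trans[OF sub_c that(1)] that(2-5) by fast
  have labels_c: "labels c \<subseteq> N"
    using Node.prems(1) c(1) by auto
  consider (deep) "card N < height c" | (exact) "card N = height c"
    using Node.prems(3) c(2) by linarith
  then show ?case
  proof cases
    case deep
    then show ?thesis
      using Node.IH[OF c(1) labels_c Node.prems(2)] lift by blast
  next
    case exact
    show ?thesis
    proof (cases "A \<in> labels c")
      case True
      then obtain s v y where "subtree c s v y" "root s = Inl A"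
        using label_subtree[OF True] by (elim exE conjE) (rule that)
      moreover have "height s < height ?t"
        using subtree_height[OF \<open>subtree c s v y\<close>] c(2) by simp
      ultimately show ?thesis
        using subtree.here[of ?t] subtree_trans[OF sub_c] exact c(2) by fastforce
    next
      case False
      then have "labels c \<subseteq> N - {A}" and "card (N - {A}) < height c"
        using labels_c exact \<open>1 \<le> card N\<close> \<open>A \<in> N\<close> Node.prems(2) by auto
      from Node.IH[OF c(1) this(1) _ this(2)] Node.prems(2)
      show ?thesis
        using lift \<open>A \<in> N\<close> by fastforce
    qed
  qed
qed simp

definition pumped :: "'a list \<Rightarrow> 'a list \<Rightarrow> 'a list \<Rightarrow> 'a list \<Rightarrow> 'a list \<Rightarrow> nat \<Rightarrow> 'a list" where
  "pumped u v x y z i = u @ concat (replicate i v) @ x @ concat (replicate i y) @ z"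

(* If t2 is a subtree of t1 with the same root, then t2 can be replaced by t1 repeatedly,
   which pumps the words v and y surrounding t2 simultaneously. *)
lemma pump_subtree:
  assumes "subtree t1 t2 v y" and "parse_tree P t1" and "root t2 = root t1"
  shows "\<exists>T. parse_tree P T \<and> root T = root t1
    \<and> yield T = concat (replicate i v) @ yield t2 @ concat (replicate i y)"
proof (induction i)
  case 0
  show ?case
    using assms subtree_parse_tree by (intro exI[of _ t2]) auto
next
  case (Suc i)
  then obtain T where T: "parse_tree P T" "root T = root t1"
    "yield T = concat (replicate i v) @ yield t2 @ concat (replicate i y)"
    by (elim exE conjE) (rule that)
  obtain T' where "parse_tree P T'" "root T' = root t1" "yield T' = v @ yield T @ y"
    using subtree_replace[OF assms(1,2) T(1)] T(2) assms(3) by (auto intro: that)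
  moreover have "concat (replicate i y) @ y = y @ concat (replicate i y)"
    by (induction i) simp_all
  ultimately show ?case
    using T(3) by (intro exI[of _ T']) simp
qed

(* The pumping lemma for a single size-minimal parse tree with a long yield.
   Minimality of t guarantees that the pumped parts v and y are not both empty. *)
lemma pumping_tree:
  assumes fin: "finite P" and b: "\<forall>(A, \<alpha>) \<in> P. length \<alpha> \<le> b" "1 \<le> b"
    and t: "parse_tree P t"
    and minimal: "\<And>t'. parse_tree P t' \<Longrightarrow> root t' = root t \<Longrightarrow> yield t' = yield t \<Longrightarrow> tsize t \<le> tsize t'"
    and long: "b ^ (card (fst ` P) + 1) < length (yield t)"
  shows "\<exists>u v x y z. yield t = u @ v @ x @ y @ z \<and> length (v @ x @ y) \<le> b ^ (card (fst ` P) + 1)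
    \<and> v @ y \<noteq> [] \<and> (\<forall>i. \<exists>t'. parse_tree P t' \<and> root t' = root t \<and> yield t' = pumped u v x y z i)"
proof -
  let ?k = "card (fst ` P)"
  have "?k < height t"
  proof (rule ccontr)
    assume "\<not> ?k < height t"
    then have "b ^ height t \<le> b ^ (?k + 1)"
      using b(2) by (intro power_increasing) simp_all
    then show False
      using yield_length_bound[OF b t] long by simp
  qed
  from repeated_label[OF labels_parse_tree[OF t] finite_imageI[OF fin] this]
  obtain t1 t2 u z v y where t1: "subtree t t1 u z" and t2: "subtree t1 t2 v y"
    and roots: "root t2 = root t1" and heights: "height t2 < height t1" "height t1 \<le> ?k + 1"
    by (elim exE conjE) (rule that)
  have parse_t1: "parse_tree P t1" and parse_t2: "parse_tree P t2"
    using subtree_parse_tree t t1 t2 by blast+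
  have yield_t: "yield t = u @ v @ yield t2 @ y @ z"
    using subtree_yield[OF t1] subtree_yield[OF t2] by simp
  have "length (v @ yield t2 @ y) \<le> b ^ (?k + 1)"
  proof -
    have "length (v @ yield t2 @ y) \<le> b ^ height t1"
      using yield_length_bound[OF b parse_t1] subtree_yield[OF t2] by simp
    also have "\<dots> \<le> b ^ (?k + 1)"
      using heights(2) b(2) by (intro power_increasing) simp_all
    finally show ?thesis .
  qed
  moreover have "v @ y \<noteq> []"
  proof
    assume "v @ y = []"
    obtain t' where t': "parse_tree P t'" "root t' = root t" "yield t' = u @ yield t2 @ z"
      "tsize t' + tsize t1 = tsize t + tsize t2"
      using subtree_replace[OF t1 t parse_t2 roots] by (elim exE conjE) (rule that)
    have "tsize t2 < tsize t1"
      using subtree_tsize[OF t2] heights(1) by auto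
    moreover have "tsize t \<le> tsize t'"
      using minimal[OF t'(1,2)] t'(3) yield_t \<open>v @ y = []\<close> by simp
    ultimately show False
      using t'(4) by simp
  qed
  moreover have "\<exists>t'. parse_tree P t' \<and> root t' = root t \<and> yield t' = pumped u v (yield t2) y z i"
    for i
  proof -
    obtain T where T: "parse_tree P T" "root T = root t1"
      "yield T = concat (replicate i v) @ yield t2 @ concat (replicate i y)"
      using pump_subtree[OF t2 parse_t1 roots, where i=i] by (elim exE conjE) (rule that)
    obtain t' where "parse_tree P t'" "root t' = root t" "yield t' = u @ yield T @ z"
      using subtree_replace[OF t1 t T(1,2)] by (elim exE conjE) (rule that)
    then show ?thesis
      using T(3) by (intro exI[of _ t']) (simp add: pumped_def)
  qed
  ultimately show ?thesis
    using yield_t by blast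
qed

lemma pumping_lemma:
  assumes "finite P"
  shows "\<exists>p. \<forall>w \<in> lang P S. p < length w \<longrightarrow> (\<exists>u v x y z. w = u @ v @ x @ y @ z
    \<and> length (v @ x @ y) \<le> p \<and> v @ y \<noteq> [] \<and> (\<forall>i. pumped u v x y z i \<in> lang P S))"
proof -
  define b where "b = Max (insert 1 ((\<lambda>(A, \<alpha>). length \<alpha>) ` P))"
  have b: "\<forall>(A, \<alpha>) \<in> P. length \<alpha> \<le> b" "1 \<le> b"
    using assms by (auto simp: b_def intro!: Max_ge)
  show ?thesis
  proof (intro exI[of _ "b ^ (card (fst ` P) + 1)"] ballI impI)
    fix w
    assume "w \<in> lang P S" and long: "b ^ (card (fst ` P) + 1) < length w"
    then obtain t0 where "parse_tree P t0 \<and> root t0 = Inl S \<and> yield t0 = w"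
      unfolding lang_iff_parse_tree by (elim exE) (rule that)
    then have "\<exists>t. (parse_tree P t \<and> root t = Inl S \<and> yield t = w) \<and>
        (\<forall>t'. parse_tree P t' \<and> root t' = Inl S \<and> yield t' = w \<longrightarrow> tsize t \<le> tsize t')"
      by (rule ex_has_least_nat)
    then obtain t where t: "parse_tree P t" "root t = Inl S" "yield t = w"
      and least: "\<forall>t'. parse_tree P t' \<and> root t' = Inl S \<and> yield t' = w \<longrightarrow> tsize t \<le> tsize t'"
      by (elim exE conjE) (rule that)
    have minimal: "tsize t \<le> tsize t'"
      if "parse_tree P t'" "root t' = root t" "yield t' = yield t" for t'
      using least that t by simp
    from pumping_tree[OF assms b t(1) minimal] long t
    show "\<exists>u v x y z. w = u @ v @ x @ y @ z \<and> length (v @ x @ y) \<le> b ^ (card (fst ` P) + 1)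
      \<and> v @ y \<noteq> [] \<and> (\<forall>i. pumped u v x y z i \<in> lang P S)"
      unfolding lang_iff_parse_tree by simp
  qed
qed

lemma count_list_shuffles:
  "zs \<in> shuffles xs ys \<Longrightarrow> count_list zs a = count_list xs a + count_list ys a"
  using filter_shuffles[of "(=) a" xs ys] length_shuffles
  by (fastforce simp: count_list_eq_length_filter)

lemma take_shuffles:
  "zs \<in> shuffles xs ys \<Longrightarrow> \<exists>i j. take k zs \<in> shuffles (take i xs) (take j ys)"
proof (induction zs arbitrary: xs ys k)
  case Nil
  then show ?case
    by (intro exI[of _ 0]) simp
next
  case (Cons c zs)
  show ?case
  proof (cases k)
    case 0
    then show ?thesis
      by (intro exI[of _ 0]) simp
  next
    case (Suc k')
    from Cons.prems consider
        (left) xs' where "xs = c # xs'" "zs \<in> shuffles xs' ys"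
      | (right) ys' where "ys = c # ys'" "zs \<in> shuffles xs ys'"
      unfolding Cons_in_shuffles_iff by (metis list.collapse)
    then show ?thesis
    proof cases
      case left
      then obtain i j where "take k' zs \<in> shuffles (take i xs') (take j ys)"
        using Cons.IH by blast
      then show ?thesis
        using left Suc by (intro exI[of _ "Suc i"] exI[of _ j]) (simp add: Cons_in_shuffles_leftI)
    next
      case right
      then obtain i j where "take k' zs \<in> shuffles (take i xs) (take j ys')"
        using Cons.IH by blast
      then show ?thesis
        using right Suc by (intro exI[of _ i] exI[of _ "Suc j"]) (simp add: Cons_in_shuffles_rightI)
    qed
  qed
qed

lemma shuffle3_count:
  assumes "q \<in> shuffle3 w"
  shows "count_list q a = 3 * count_list w a"
proof -
  from assms obtain r where "r \<in> shuffles w w" and "q \<in> shuffles r w"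
    unfolding shuffle3_def by blast
  then show ?thesis
    using count_list_shuffles[of r w w a] count_list_shuffles[of q r w a] by simp
qed

lemma shuffle3_take:
  assumes "q \<in> shuffle3 w"
  shows "\<exists>i1 i2 i3. \<forall>a. count_list (take m q) a
    = count_list (take i1 w) a + count_list (take i2 w) a + count_list (take i3 w) a"
proof -
  from assms obtain r where r: "r \<in> shuffles w w" and q: "q \<in> shuffles r w"
    unfolding shuffle3_def by blast
  obtain i i3 where outer: "take m q \<in> shuffles (take i r) (take i3 w)"
    using take_shuffles[OF q] by blast
  obtain i1 i2 where inner: "take i r \<in> shuffles (take i1 w) (take i2 w)"
    using take_shuffles[OF r] by blast
  show ?thesis
    using count_list_shuffles[OF outer] count_list_shuffles[OF inner]
    by (intro exI[of _ i1] exI[of _ i2] exI[of _ i3]) simp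
qed

lemma shuffle3_hd:
  assumes "c # q \<in> shuffle3 w"
  shows "w \<noteq> [] \<and> hd w = c"
proof -
  from assms obtain r where r: "r \<in> shuffles w w" and q: "c # q \<in> shuffles r w"
    unfolding shuffle3_def by blast
  have "w \<noteq> [] \<and> hd w = c" if "r \<noteq> [] \<and> hd r = c"
  proof -
    have "c # tl r \<in> shuffles w w"
      using r that by (metis list.collapse)
    then show ?thesis
      unfolding Cons_in_shuffles_iff by blast
  qed
  with q show ?thesis
    unfolding Cons_in_shuffles_iff by blast
qed

lemma length_bit01: "length q = count_list q Zero + count_list q One"
proof (induction q)
  case (Cons c q)
  then show ?case
    by (cases c) simp_all
qed simp

(* ones_before k q is the number of letters One preceding the (k+1)-st letter Zero of q
   (all letters One of q if q has at most k letters Zero). *)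
fun ones_before :: "nat \<Rightarrow> bit01 list \<Rightarrow> nat" where
  "ones_before k [] = 0"
| "ones_before k (One # q) = Suc (ones_before k q)"
| "ones_before 0 (Zero # q) = 0"
| "ones_before (Suc k) (Zero # q) = ones_before k q"

lemma ones_before_append:
  "ones_before k (q @ r) = (if count_list q Zero \<le> k
     then count_list q One + ones_before (k - count_list q Zero) r else ones_before k q)"
proof (induction q arbitrary: k)
  case (Cons c q)
  then show ?case
    by (cases c; cases k) simp_all
qed simp

lemma ones_before_le_length: "ones_before k q \<le> length q"
  by (induction k q rule: ones_before.induct) simp_all

lemma ones_before_prefix:
  "k < count_list q Zero \<Longrightarrow>
    \<exists>m. count_list (take m q) Zero = k \<and> count_list (take m q) One = ones_before k q"
proof (induction k q rule: ones_before.induct)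
  case (2 k q)
  then obtain m where "count_list (take m q) Zero = k" "count_list (take m q) One = ones_before k q"
    by auto
  then show ?case
    by (intro exI[of _ "Suc m"]) simp
next
  case (3 q)
  show ?case
    by (intro exI[of _ 0]) simp
next
  case (4 k q)
  then obtain m where "count_list (take m q) Zero = k" "count_list (take m q) One = ones_before k q"
    by auto
  then show ?case
    by (intro exI[of _ "Suc m"]) simp
qed simp

lemma prefix_ones_bound:
  "count_list (take m (Zero # w)) One \<le> count_list (take m (Zero # w)) Zero * count_list (Zero # w) One"
proof (cases m)
  case (Suc m')
  have "count_list (take m (Zero # w)) One \<le> count_list (Zero # w) One"
    by (metis append_take_drop_id count_list_append le_add1)
  moreover have "1 \<le> count_list (take m (Zero # w)) Zero"
    using Suc by simp
  ultimately show ?thesis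
    using mult_le_mono1 order_trans by fastforce
qed simp

(* The prefix of q up to that Zero
   consists of three prefixes of w containing k Zeros in total, and w starts with a Zero. *)
lemma L3_ones_before_bound:
  assumes "q \<in> L3" and "ones_before 0 q = 0" and "k < count_list q Zero"
  shows "3 * ones_before k q \<le> k * count_list q One"
proof -
  from assms(1) obtain w where w: "q \<in> shuffle3 w"
    unfolding L3_def by blast
  obtain c q' where "q = c # q'"
    using assms(3) by (cases q) auto
  with assms(2) have "q = Zero # q'"
    by (cases c) simp_all
  then obtain w' where w': "w = Zero # w'"
    using shuffle3_hd w by (metis list.collapse)
  obtain m where m: "count_list (take m q) Zero = k" "count_list (take m q) One = ones_before k q"
    using ones_before_prefix[OF assms(3)] by blast
  obtain i1 i2 i3 where split: "\<forall>a. count_list (take m q) a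
      = count_list (take i1 w) a + count_list (take i2 w) a + count_list (take i3 w) a"
    using shuffle3_take[OF w] by blast
  have "ones_before k q \<le> (count_list (take i1 w) Zero + count_list (take i2 w) Zero
      + count_list (take i3 w) Zero) * count_list w One"
    using split m(2) prefix_ones_bound[of _ w'] unfolding w' distrib_right
    by (metis add_mono)
  also have "\<dots> = k * count_list w One"
    using split m(1) by simp
  finally show ?thesis
    using shuffle3_count[OF w, of One] by simp
qed

lemma count_list_replicate: "count_list (replicate n b) a = (if b = a then n else 0)"
  by (induction n) auto

lemma count_list_concat_replicate:
  "count_list (concat (replicate i r)) a = i * count_list r a"
  by (induction i) simp_all

definition witness :: "nat \<Rightarrow> bit01 list" where
  "witness n = (let b = Zero # replicate n One in b @ b @ b)"

lemma append_in_shuffles: "xs @ ys \<in> shuffles xs ys"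
  by (induction xs) (simp_all add: Cons_in_shuffles_leftI)

lemma witness_in_L3: "witness n \<in> L3"
proof -
  let ?b = "Zero # replicate n One"
  have "?b @ ?b @ ?b \<in> shuffle3 ?b"
    unfolding shuffle3_def using append_in_shuffles[of ?b ?b] append_in_shuffles[of "?b @ ?b" ?b]
    by auto
  then show ?thesis
    unfolding L3_def witness_def by auto
qed

lemma witness_counts: "count_list (witness n) Zero = 3" "count_list (witness n) One = 3 * n"
  by (simp_all add: witness_def count_list_replicate)

lemma witness_ones_before: "k < 3 \<Longrightarrow> ones_before k (witness n) = k * n"
  by (auto simp: witness_def ones_before_append count_list_replicate less_Suc_eq numeral_3_eq_3)

lemma count_list_pumped:
  "count_list (pumped u v x y z i) a
    = count_list (u @ x @ z) a + i * count_list (v @ y) a"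
  by (simp add: pumped_def count_list_concat_replicate algebra_simps)

lemma ones_before_pumped:
  assumes "count_list v Zero = 0" and "count_list y Zero = 0"
  shows "\<exists>b c. (\<forall>i. ones_before k (pumped u v x y z i) = b + i * c)
    \<and> (c = 0 \<or> c = count_list v One \<or> c = count_list v One + count_list y One)"
proof -
  consider "k < count_list u Zero"
    | "count_list u Zero \<le> k" "k < count_list (u @ x) Zero"
    | "count_list (u @ x) Zero \<le> k"
    by linarith
  then show ?thesis
  proof cases
    case 1
    show ?thesis
      by (rule exI[of _ "ones_before k u"], rule exI[of _ 0])
        (use 1 in \<open>simp add: pumped_def ones_before_append\<close>)
  next
    case 2
    show ?thesis
      by (rule exI[of _ "count_list u One + ones_before (k - count_list u Zero) x"],
          rule exI[of _ "count_list v One"])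
        (use 2 assms in \<open>auto simp add: pumped_def ones_before_append count_list_concat_replicate\<close>)
  next
    case 3
    show ?thesis
      by (rule exI[of _ "count_list (u @ x) One + ones_before (k - count_list (u @ x) Zero) z"],
          rule exI[of _ "count_list v One + count_list y One"])
        (use 3 assms in \<open>auto simp add: pumped_def ones_before_append count_list_concat_replicate
          algebra_simps\<close>)
  qed
qed

(* Arithmetic core of the zero-free case: the bound 3 * ones_before k <= k * (number of Ones)
   at the exponents 0 and 2, together with equality at exponent 1, forces the slope c of
   ones_before k to be exactly k/3 of the total slope m. *)
lemma pumping_balance:
  fixes b c k n r m :: nat
  assumes "b + c = k * n" and "r + m = 3 * n"
    and "3 * b \<le> k * r" and "3 * (b + 2 * c) \<le> k * (r + 2 * m)"
  shows "3 * c = k * m"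
proof -
  have "k * r + k * m = 3 * (k * n)"
    using arg_cong[OF assms(2), of "(*) k"] by (simp add: algebra_simps)
  then show ?thesis
    using assms(1,3,4) by (simp add: algebra_simps)
qed

(* Pumping down or up violates the bound of
   L3_ones_before_bound for k = 1 or k = 2, since the slopes would have to be m/3 and 2m/3,
   which is incompatible with the three possible slopes. *)
lemma zero_free_pump_leaves_L3:
  assumes dec: "witness n = u @ v @ x @ y @ z" and nonempty: "v @ y \<noteq> []"
    and v0: "count_list v Zero = 0" and y0: "count_list y Zero = 0"
  shows "pumped u v x y z 0 \<notin> L3 \<or> pumped u v x y z 2 \<notin> L3"
proof (rule ccontr)
  define W where "W = pumped u v x y z"
  assume "\<not> (pumped u v x y z 0 \<notin> L3 \<or> pumped u v x y z 2 \<notin> L3)"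
  then have in_L3: "W i \<in> L3" if "i \<in> {0, 2}" for i
    using that by (auto simp: W_def)
  let ?r = "count_list (u @ x @ z) One" and ?m = "count_list (v @ y) One"
  have W1: "W 1 = witness n"
    using dec by (simp add: W_def pumped_def)
  have ones: "count_list (W i) One = ?r + i * ?m" for i
    unfolding W_def by (rule count_list_pumped)
  have zeros: "count_list (W i) Zero = 3" for i
    using count_list_pumped[of u v x y z i Zero] count_list_pumped[of u v x y z 1 Zero]
      W1 witness_counts(1) v0 y0 by (simp add: W_def)
  have total: "?r + ?m = 3 * n"
    using ones[of 1] W1 witness_counts(2) by simp
  have "0 < length (v @ y)"
    using nonempty by blast
  then have "0 < ?m"
    using length_bit01[of "v @ y"] v0 y0 unfolding count_list_append by linarith
  (* The number of Ones before the first Zero is affine in i with nonnegative coefficients and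
     vanishes at i = 1, so every pumped word starts with a Zero. *)
  obtain b0 c0 where "\<forall>i. ones_before 0 (W i) = b0 + i * c0"
    using ones_before_pumped[OF v0 y0, of 0 u x z] unfolding W_def by blast
  moreover have "ones_before 0 (W 1) = 0"
    using W1 witness_ones_before[of 0 n] by simp
  ultimately have starts_with_zero: "ones_before 0 (W i) = 0" for i
    by simp
  have balance: "3 * c = k * ?m"
    if "0 < k" "k < 3" and lin: "\<forall>i. ones_before k (W i) = b + i * c" for k b c
  proof (rule pumping_balance)
    show "b + c = k * n"
      using lin W1 witness_ones_before[OF that(2)] by (metis mult_1)
    show "3 * b \<le> k * ?r"
      using L3_ones_before_bound[OF in_L3 starts_with_zero, of 0 k] zeros ones[of 0] lin that
      by simp
    show "3 * (b + 2 * c) \<le> k * (?r + 2 * ?m)"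
      using L3_ones_before_bound[OF in_L3 starts_with_zero, of 2 k] zeros ones[of 2] lin that
      by simp
  qed (fact total)
  obtain c1 where "3 * c1 = ?m"
    and c1: "c1 = 0 \<or> c1 = count_list v One \<or> c1 = count_list v One + count_list y One"
    using ones_before_pumped[OF v0 y0, of 1 u x z] balance[of 1] unfolding W_def by fastforce
  moreover obtain c2 where "3 * c2 = 2 * ?m"
    and c2: "c2 = 0 \<or> c2 = count_list v One \<or> c2 = count_list v One + count_list y One"
    using ones_before_pumped[OF v0 y0, of 2 u x z] balance[of 2] unfolding W_def by fastforce
  ultimately show False
    using \<open>0 < ?m\<close> by auto
qed

(* Case 2: v y contains one or two Zeros; pumping down leaves a number of Zeros not
   divisible by 3. *)
lemma few_zeros_pump_leaves_L3:
  assumes dec: "witness n = u @ v @ x @ y @ z" and few: "count_list (v @ y) Zero \<in> {1, 2}"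
  shows "pumped u v x y z 0 \<notin> L3"
proof
  assume "pumped u v x y z 0 \<in> L3"
  then obtain w where "pumped u v x y z 0 \<in> shuffle3 w"
    unfolding L3_def by blast
  then have "count_list (pumped u v x y z 0) Zero = 3 * count_list w Zero"
    by (rule shuffle3_count)
  then have "3 dvd count_list (u @ x @ z) Zero"
    using count_list_pumped[of u v x y z 0 Zero] by (metis add_0_right dvd_triv_left mult_0)
  moreover have "count_list (u @ x @ z) Zero + count_list (v @ y) Zero = 3"
    using witness_counts(1)[of n] unfolding dec by simp
  ultimately show False
    using few by auto
qed

(* Case 3: v y contains all three Zeros; then v x y covers the whole block 1^n between the
   first two Zeros, so it is long. *)
lemma many_zeros_pump_window:
  assumes dec: "witness n = u @ v @ x @ y @ z" and many: "3 \<le> count_list (v @ y) Zero"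
  shows "n \<le> length (v @ x @ y)"
proof -
  have zeros: "count_list u Zero = 0" "1 < count_list (v @ x @ y) Zero"
    using witness_counts(1)[of n] many unfolding dec by simp_all
  have "count_list u One = 0"
    using witness_ones_before[of 0 n] zeros(1) unfolding dec by (simp add: ones_before_append)
  then have "u = []"
    using length_bit01[of u] zeros(1) by simp
  then have "n = ones_before 1 ((v @ x @ y) @ z)"
    using witness_ones_before[of 1 n] unfolding dec by simp
  also have "\<dots> = ones_before 1 (v @ x @ y)"
    using zeros(2) by (simp add: ones_before_append del: append_assoc)
  also have "\<dots> \<le> length (v @ x @ y)"
    by (rule ones_before_le_length)
  finally show ?thesis .
qed

lemma witness_not_pumpable:
  assumes dec: "witness n = u @ v @ x @ y @ z" and window: "length (v @ x @ y) < n"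
    and nonempty: "v @ y \<noteq> []"
  shows "\<exists>i. pumped u v x y z i \<notin> L3"
proof -
  consider "count_list v Zero = 0" "count_list y Zero = 0"
    | "count_list (v @ y) Zero \<in> {1, 2}"
    | "3 \<le> count_list (v @ y) Zero"
    by fastforce
  then show ?thesis
  proof cases
    case 1
    then show ?thesis
      using zero_free_pump_leaves_L3[OF dec nonempty] by blast
  next
    case 2
    then show ?thesis
      using few_zeros_pump_leaves_L3[OF dec] by blast
  next
    case 3
    then show ?thesis
      using many_zeros_pump_window[OF dec] window by simp
  qed
qed

theorem mainTheorem2:
  shows "\<not> context_free L3"
proof
  assume "context_free L3"
  then obtain P :: "(nat, bit01) prods" and S where "finite P" and L: "lang P S = L3"
    unfolding context_free_def by blast
  then obtain p where pump: "\<forall>w \<in> L3. p < length w \<longrightarrow> (\<exists>u v x y z. w = u @ v @ x @ y @ z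
      \<and> length (v @ x @ y) \<le> p \<and> v @ y \<noteq> [] \<and> (\<forall>i. pumped u v x y z i \<in> L3))"
    using pumping_lemma[of P S] by auto
  have "p < length (witness (Suc p))"
    by (simp add: witness_def)
  with bspec[OF pump witness_in_L3]
  have "\<exists>u v x y z. witness (Suc p) = u @ v @ x @ y @ z \<and> length (v @ x @ y) < Suc p
      \<and> v @ y \<noteq> [] \<and> (\<forall>i. pumped u v x y z i \<in> L3)"
    by (auto simp: less_Suc_eq_le)
  then show False
    using witness_not_pumpable by blast
qed

end
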